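(* Let the Timehash scheme be as described in the context, with hierarchy $m_1 > m_2 > \dots > m_k$. Let a document have operating hours given by integers $0 \le s < e \le 1440$, i.e. it is open at the minutes $t$ with $s \le t < e$, and let $H(s,e)$ be its set of index keys. Then for every minute $t$ with $s \le t < e$, the query key set $Q(t)$ satisfies $Q(t) \cap H(s,e) \neq \emptyset$; that is, the document is retrieved by the point query at $t$ (zero false negatives).
   Context: Time of day is measured in minutes since midnight, $\{0,1,\dots,1439\}$. A hierarchy of measures is a sequence of positive integers $m_1 > m_2 > \dots > m_k$ with $m_k = 1$, $m_i$ dividing $m_{i-1}$ for $2 \le i \le k$, and $m_1$ dividing $1440$ (e.g. $(240,60,15,5,1)$). A level-$i$ block is a set of minutes $[a, a+m_i) = \{a, a+1, \dots, a+m_i-1\}$ with $a$ a nonnegative multiple of $m_i$ and $a + m_i \le 1440$; its key is the pair $(i,a)$. Every level-$i$ block with $i \ge 2$ is contained in a unique level-$(i-1)$ block, its parent. For a range $0 \le s < e \le 1440$ (the minutes $s,\dots,e-1$), the index key set $H(s,e)$ is the set of keys of all blocks $B$ (at any level) such that $B \subseteq [s,e)$ and either $B$ is at level 1 or the parent of $B$ is not contained in $[s,e)$ (this is the hierarchical decomposition obtained by taking the complete coarsest blocks inside the range and recursively refining the partially covered boundary blocks at finer levels). For a query minute $t$, the query key set $Q(t)$ consists of the keys of the $k$ blocks, one at each level $i=1,\dots,k$, that contain $t$. A document is retrieved by the point query at $t$ iff some query key in $Q(t)$ equals some index key of the document. *)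

theory Defs
  imports Main
begin

text \<open>A hierarchy of measures m_1 > ... > m_k is a list ms with ms ! (i - 1) = m_i.
  Levels are numbered 1..k as in the paper; a key is a pair (level i, start a).\<close>

definition meas :: "nat list \<Rightarrow> nat \<Rightarrow> nat" where
  "meas ms i = ms ! (i - 1)"

definition hierarchy :: "nat list \<Rightarrow> bool" where
  "hierarchy ms \<longleftrightarrow> ms \<noteq> [] \<and> (\<forall>x\<in>set ms. 0 < x)
     \<and> sorted_wrt (>) ms \<and> last ms = 1
     \<and> (\<forall>i. 2 \<le> i \<and> i \<le> length ms \<longrightarrow> meas ms i dvd meas ms (i - 1))
     \<and> hd ms dvd 1440"

definition block :: "nat list \<Rightarrow> nat \<Rightarrow> nat \<Rightarrow> nat set" where
  "block ms i a = {a ..< a + meas ms i}"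

definition is_block :: "nat list \<Rightarrow> nat \<times> nat \<Rightarrow> bool" where
  "is_block ms k \<longleftrightarrow> (case k of (i, a) \<Rightarrow>
     1 \<le> i \<and> i \<le> length ms \<and> meas ms i dvd a \<and> a + meas ms i \<le> 1440)"

text \<open>Parent of a level-i block (i >= 2): the unique level-(i-1) block containing it.\<close>
definition parent_start :: "nat list \<Rightarrow> nat \<Rightarrow> nat \<Rightarrow> nat" where
  "parent_start ms i a = a - a mod meas ms (i - 1)"

definition index_keys :: "nat list \<Rightarrow> nat \<Rightarrow> nat \<Rightarrow> (nat \<times> nat) set" where
  "index_keys ms s e = {(i, a). is_block ms (i, a) \<and> block ms i a \<subseteq> {s ..< e}
      \<and> (i = 1 \<or> \<not> block ms (i - 1) (parent_start ms i a) \<subseteq> {s ..< e})}"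

definition query_keys :: "nat list \<Rightarrow> nat \<Rightarrow> (nat \<times> nat) set" where
  "query_keys ms t = {(i, a). is_block ms (i, a) \<and> t \<in> block ms i a}"

end

theory Submission
  imports Defs
begin

(* The level-i block containing t starts at t - t mod m_i, and since m_i divides m_(i-1) its
   parent is the level-(i-1) block containing t.  At the finest level this block is {t}, which
   lies in [s,e).  So there is a coarsest level whose block around t lies in [s,e); its parent
   does not, hence that block is both an index key and a query key. *)

lemma round_down_round_down:
  fixes t m M :: nat
  assumes "m dvd M"
  shows "(t - t mod m) - (t - t mod m) mod M = t - t mod M"
proof (cases "m = 0")
  case True
  then show ?thesis using assms by simp
next
  case False
  from assms obtain c where M: "M = m * c" by blast
  have "(t div m * m) div M = t div M"
    using False by (simp add: M div_mult2_eq mult.commute[of _ m])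
  then show ?thesis by (simp add: minus_mod_eq_div_mult)
qed

lemma hierarchy_meas_pos:
  assumes "hierarchy ms" and "1 \<le> i" and "i \<le> length ms"
  shows "0 < meas ms i"
  using assms by (simp add: hierarchy_def meas_def)

lemma hierarchy_meas_length:
  assumes "hierarchy ms"
  shows "meas ms (length ms) = 1"
  using assms by (auto simp: hierarchy_def meas_def last_conv_nth)

lemma hierarchy_meas_dvd:
  assumes "hierarchy ms" and "2 \<le> i" and "i \<le> length ms"
  shows "meas ms i dvd meas ms (i - 1)"
  using assms by (simp add: hierarchy_def)

lemma mem_block_round_down:
  assumes "0 < meas ms i"
  shows "t \<in> block ms i (t - t mod meas ms i)"
  using mod_less_divisor[OF assms, of t] mod_less_eq_dividend[of t] by (simp add: block_def)

lemma parent_start_round_down: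
  assumes "hierarchy ms" and "2 \<le> i" and "i \<le> length ms"
  shows "parent_start ms i (t - t mod meas ms i) = t - t mod meas ms (i - 1)"
  using round_down_round_down[OF hierarchy_meas_dvd[OF assms]]
  by (simp add: parent_start_def)

lemma is_block_round_down:
  assumes "hierarchy ms" and "1 \<le> i" and "i \<le> length ms"
    and "block ms i (t - t mod meas ms i) \<subseteq> {s..<e}" and "e \<le> 1440"
  shows "is_block ms (i, t - t mod meas ms i)"
proof -
  have "0 < meas ms i" using hierarchy_meas_pos assms(1-3) .
  then have "t - t mod meas ms i + meas ms i \<le> e"
    using assms(4) mod_less_eq_dividend[of t] by (auto simp: block_def atLeastLessThan_subset_iff)
  then show ?thesis using assms(2,3,5) by (simp add: is_block_def minus_mod_eq_mult_div)
qed

lemma coarsest_contained_block_is_common_key: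
  assumes "hierarchy ms" and "e \<le> 1440" and "1 \<le> i" and "i \<le> length ms"
    and contained: "block ms i (t - t mod meas ms i) \<subseteq> {s..<e}"
    and coarsest: "\<And>j. 1 \<le> j \<Longrightarrow> j < i \<Longrightarrow> \<not> block ms j (t - t mod meas ms j) \<subseteq> {s..<e}"
  shows "(i, t - t mod meas ms i) \<in> query_keys ms t \<inter> index_keys ms s e"
proof -
  have key: "is_block ms (i, t - t mod meas ms i)"
    using is_block_round_down assms(1,3,4) contained assms(2) .
  have "t \<in> block ms i (t - t mod meas ms i)"
    using mem_block_round_down hierarchy_meas_pos assms(1,3,4) by blast
  moreover have "\<not> block ms (i - 1) (parent_start ms i (t - t mod meas ms i)) \<subseteq> {s..<e}"
    if "i \<noteq> 1"
    using that assms(3,4) coarsest[of "i - 1"] parent_start_round_down[OF assms(1)] by simp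
  ultimately show ?thesis
    using key contained by (auto simp: query_keys_def index_keys_def)
qed

theorem theorem1:
  fixes ms :: "nat list" and s e t :: nat
  assumes "hierarchy ms"
    and "s < e" and "e \<le> 1440"
    and "s \<le> t" and "t < e"
  shows "query_keys ms t \<inter> index_keys ms s e \<noteq> {}"
proof -
  define contained where "contained i \<longleftrightarrow>
    1 \<le> i \<and> i \<le> length ms \<and> block ms i (t - t mod meas ms i) \<subseteq> {s..<e}" for i
  have "1 \<le> length ms" using assms(1) by (simp add: hierarchy_def Suc_leI)
  then have "contained (length ms)"
    using assms hierarchy_meas_length[OF assms(1)] by (simp add: contained_def block_def)
  then obtain i where "contained i" and least: "\<forall>j<i. \<not> contained j"
    using ex_least_nat_le by blast
  then have i: "1 \<le> i" "i \<le> length ms" "block ms i (t - t mod meas ms i) \<subseteq> {s..<e}"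
    by (simp_all add: contained_def)
  have "\<not> block ms j (t - t mod meas ms j) \<subseteq> {s..<e}" if "1 \<le> j" "j < i" for j
    using least that i(2) by (simp add: contained_def)
  then show ?thesis
    using coarsest_contained_block_is_common_key[OF assms(1,3) i] by blast
qed

end
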